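(* Let $n\ge3$ and consider the scoring two-player Tower of Hanoi game on three pegs with real weights $w_{12},w_{13},w_{23}$, under any of the ending conditions (EC1)–(EC5), played from an arbitrary (non-final) position, where the previous player's move did not move the smallest disk. Then the player to move wins, unless $w_{12}=w_{13}=w_{23}\le0$.
   Context: Tower of Hanoi on three pegs (labeled 1, 2, 3) with $n$ disks of pairwise distinct sizes: a position assigns each disk to a peg, disks on each peg stacked with sizes decreasing from bottom to top. A legal move transfers the top disk of one peg to a different peg that is empty or has a larger top disk; a move from Peg $i$ to Peg $j$ or from Peg $j$ to Peg $i$ is a move along edge $\{i,j\}$. A tower position is one with all disks on one peg. Two-player game: two players alternate moves; a player may not move the disk that the opponent moved in the immediately preceding move (so a position in the two-player game also records the last moved disk). The game starts (ordinarily) with all disks on Peg 1 and ends when the tower has been transferred to a final peg, according to one fixed ending condition: (EC1) all disks on a given peg distinct from Peg 1; (EC2) all disks on Peg 1, the largest disk having been moved at least once; (EC3) all disks on Peg 1, the smallest disk having been moved at least once; (EC4) all disks on any peg, the largest disk having been moved at least once; (EC5) all disks on any peg, the smallest disk having been moved at least once. A move creating a tower position that does not end the game (tower on a non-final peg) is not allowed. Scoring play: real weights $w_{12},w_{13},w_{23}$ are given (with $w_{ij}=w_{ji}$); a player making a move along edge $\{i,j\}$ earns $w_{ij}$ points. When the game ends, the player with strictly more points wins, and equal points is a tie. A player "wins" if she/he has a strategy forcing the game to end with her/his victory. *)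

theory Defs
  imports Main "HOL.Real"
begin

text \<open>Disks are numbered 0,...,n-1 by size: disk 0 is the smallest, disk n-1 the largest.
  Pegs are 1, 2, 3. A position assigns a peg to each disk.\<close>

datatype ending = EC1 nat | EC2 | EC3 | EC4 | EC5

record hstate =
  pos :: "nat \<Rightarrow> nat"
  lastd :: "nat option"
  movedL :: bool
  movedS :: bool

definition peg :: "nat \<Rightarrow> bool" where
  "peg i \<longleftrightarrow> i \<in> {1, 2, 3}"

definition tower :: "nat \<Rightarrow> (nat \<Rightarrow> nat) \<Rightarrow> nat \<Rightarrow> bool" where
  "tower n p q \<longleftrightarrow> (\<forall>k<n. p k = q)"

definition valid_ending :: "ending \<Rightarrow> bool" where
  "valid_ending e = (case e of EC1 f \<Rightarrow> f \<in> {2, 3} | _ \<Rightarrow> True)"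

definition ends :: "nat \<Rightarrow> ending \<Rightarrow> hstate \<Rightarrow> bool" where
  "ends n e s = (case e of
      EC1 f \<Rightarrow> tower n (pos s) f
    | EC2 \<Rightarrow> tower n (pos s) 1 \<and> movedL s
    | EC3 \<Rightarrow> tower n (pos s) 1 \<and> movedS s
    | EC4 \<Rightarrow> (\<exists>q\<in>{1,2,3}. tower n (pos s) q) \<and> movedL s
    | EC5 \<Rightarrow> (\<exists>q\<in>{1,2,3}. tower n (pos s) q) \<and> movedS s)"

definition after :: "nat \<Rightarrow> hstate \<Rightarrow> nat \<Rightarrow> nat \<Rightarrow> hstate" where
  "after n s k j = \<lparr> pos = (pos s)(k := j), lastd = Some k,
                     movedL = (movedL s \<or> k = n - 1), movedS = (movedS s \<or> k = 0) \<rparr>"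

definition legal :: "nat \<Rightarrow> ending \<Rightarrow> hstate \<Rightarrow> nat \<Rightarrow> nat \<Rightarrow> bool" where
  "legal n e s k j \<longleftrightarrow>
     k < n \<and> peg j \<and> j \<noteq> pos s k \<and>
     (\<forall>k'<k. pos s k' \<noteq> pos s k \<and> pos s k' \<noteq> j) \<and>
     lastd s \<noteq> Some k \<and>
     ((\<exists>q. tower n (pos (after n s k j)) q) \<longrightarrow> ends n e (after n s k j))"

definition wt :: "real \<Rightarrow> real \<Rightarrow> real \<Rightarrow> nat \<Rightarrow> nat \<Rightarrow> real" where
  "wt w12 w13 w23 i j =
     (if {i, j} = {1, 2} then w12 else if {i, j} = {1, 3} then w13 else w23)"

text \<open>wins n e w12 w13 w23 s d: the player to move in state s, whose score minus the
  opponent's score is d, has a strategy forcing the game to end with her strictly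
  higher score. (Least fixed point: infinite plays and stuck plays are not wins.)\<close>
inductive wins :: "nat \<Rightarrow> ending \<Rightarrow> real \<Rightarrow> real \<Rightarrow> real \<Rightarrow> hstate \<Rightarrow> real \<Rightarrow> bool"
  for n e w12 w13 w23 where
  step: "\<lbrakk> legal n e s k j;
           s' = after n s k j;
           d' = d + wt w12 w13 w23 (pos s k) j;
           (ends n e s' \<and> d' > 0) \<or>
           (\<not> ends n e s' \<and> (\<exists>k' j'. legal n e s' k' j') \<and>
            (\<forall>k' j'. legal n e s' k' j' \<longrightarrow>
               (ends n e (after n s' k' j') \<and> d' - wt w12 w13 w23 (pos s' k') j' > 0) \<or>
               (\<not> ends n e (after n s' k' j') \<and>
                 wins n e w12 w13 w23 (after n s' k' j') (d' - wt w12 w13 w23 (pos s' k') j')))) \<rbrakk>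
         \<Longrightarrow> wins n e w12 w13 w23 s d"

end

theory Submission
  imports Defs
begin

text \<open>The player to move always moves the smallest disk 0, never onto the peg holding all of disks
  1 to n-1. Then every reply of the opponent is forced, so the mover plays a solitaire game of
  rounds, choosing only where disk 0 goes. Following the Hanoi recursion she can gather disks
  1 to n-1 on any peg, hence end the game, after having moved the largest disk once. If all weights
  equal w > 0, every round nets 0 and her final move earns w. Otherwise, with disks 1 and 2 on
  peg 1, one of three closed cycles of rounds on the top three disks has net gain
  4 w_ij - 2 w_ik - 2 w_jk > 0; repeating it builds an arbitrarily large lead before she
  finishes.\<close>

locale scoring_hanoi =
  fixes n :: nat and e :: ending and w12 w13 w23 :: real
  assumes three_disks: "3 \<le> n"
begin

abbreviation W :: "nat \<Rightarrow> nat \<Rightarrow> real" where "W \<equiv> wt w12 w13 w23"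
abbreviation winning :: "hstate \<Rightarrow> real \<Rightarrow> bool" where "winning \<equiv> wins n e w12 w13 w23"

definition admissible :: "hstate \<Rightarrow> bool" where
  "admissible s \<longleftrightarrow> (\<forall>k<n. peg (pos s k)) \<and> lastd s \<noteq> Some 0"

text \<open>The disk the opponent must move after disk 0 went to peg y; a junk value unless some disk
  k > 0 lies off peg y, which can_play_round guarantees.\<close>
definition forced_disk :: "hstate \<Rightarrow> nat \<Rightarrow> nat" where
  "forced_disk s y = (LEAST k. 0 < k \<and> pos s k \<noteq> y)"

definition play_round :: "hstate \<Rightarrow> nat \<Rightarrow> hstate" where
  "play_round s y = after n (after n s 0 y) (forced_disk s y) (6 - y - pos s (forced_disk s y))"

definition round_gain :: "hstate \<Rightarrow> nat \<Rightarrow> real" where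
  "round_gain s y = W (pos s 0) y - W (pos s (forced_disk s y)) (6 - y - pos s (forced_disk s y))"

definition can_play_round :: "hstate \<Rightarrow> nat \<Rightarrow> bool" where
  "can_play_round s y \<longleftrightarrow>
     admissible s \<and> peg y \<and> y \<noteq> pos s 0 \<and> (\<exists>k. 0 < k \<and> k < n \<and> pos s k \<noteq> y)"

text \<open>plays s t \<delta>: by rounds the mover can force the play from s to t, changing her
  lead by \<open>\<delta>\<close>.\<close>
inductive plays :: "hstate \<Rightarrow> hstate \<Rightarrow> real \<Rightarrow> bool" where
  plays_refl: "plays s s 0"
| plays_round: "can_play_round s y \<Longrightarrow> plays (play_round s y) t \<delta> \<Longrightarrow> plays s t (round_gain s y + \<delta>)"

section \<open>Forced rounds\<close>

lemma forced_disk_least: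
  assumes "0 < k" "pos s k \<noteq> y"
  shows "0 < forced_disk s y" "forced_disk s y \<le> k" "pos s (forced_disk s y) \<noteq> y"
    and "\<And>j. 0 < j \<Longrightarrow> j < forced_disk s y \<Longrightarrow> pos s j = y"
proof -
  have "0 < forced_disk s y \<and> pos s (forced_disk s y) \<noteq> y"
    unfolding forced_disk_def by (rule LeastI[of _ k]) (use assms in simp)
  then show "0 < forced_disk s y" "pos s (forced_disk s y) \<noteq> y" by simp_all
  show "forced_disk s y \<le> k"
    unfolding forced_disk_def by (rule Least_le) (use assms in simp)
  show "pos s j = y" if "0 < j" "j < forced_disk s y" for j
    using not_less_Least[of j "\<lambda>k. 0 < k \<and> pos s k \<noteq> y"] that by (auto simp: forced_disk_def)
qed

lemma forced_disk_eqI: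
  assumes "0 < k" "pos s k \<noteq> y" "\<And>j. 0 < j \<Longrightarrow> j < k \<Longrightarrow> pos s j = y"
  shows "forced_disk s y = k"
  unfolding forced_disk_def
  by (rule Least_equality) (use assms in \<open>auto simp: not_less[symmetric]\<close>)

lemma forced_disk_of_round:
  assumes "can_play_round s y"
  obtains k where "k = forced_disk s y" "0 < k" "k < n" "pos s k \<noteq> y" "peg (pos s k)"
    "\<And>j. 0 < j \<Longrightarrow> j < k \<Longrightarrow> pos s j = y"
proof -
  obtain k0 where "0 < k0" "k0 < n" "pos s k0 \<noteq> y"
    using assms by (auto simp: can_play_round_def)
  with forced_disk_least[OF this(1,3)] assms show thesis
    by (intro that[OF refl]) (auto simp: can_play_round_def admissible_def)
qed

lemma no_tower_if_apart: "0 < k \<Longrightarrow> k < n \<Longrightarrow> p 0 \<noteq> p k \<Longrightarrow> \<not> tower n p q"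
  unfolding tower_def by (metis less_trans)

lemma not_ends_if_apart: "0 < k \<Longrightarrow> k < n \<Longrightarrow> pos s 0 \<noteq> pos s k \<Longrightarrow> \<not> ends n e s"
  using no_tower_if_apart by (cases e) (auto simp: ends_def)

text \<open>The opponent may not move disk 0 again; of the two remaining top disks only the smaller
  one can move, and only to the peg that is neither its own nor disk 0's.\<close>
lemma legal_reply_iff:
  assumes "can_play_round s y"
  shows "legal n e (after n s 0 y) k' j' \<longleftrightarrow>
    k' = forced_disk s y \<and> j' = 6 - y - pos s (forced_disk s y)"
proof -
  obtain k where k: "k = forced_disk s y" "0 < k" "k < n" "pos s k \<noteq> y" "peg (pos s k)"
    and below: "\<And>j. 0 < j \<Longrightarrow> j < k \<Longrightarrow> pos s j = y"
    using forced_disk_of_round[OF assms] by blast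
  have y: "peg y" "y \<noteq> pos s 0" and ad: "admissible s" using assms by (auto simp: can_play_round_def)
  define s' where "s' = after n s 0 y"
  have pos': "pos s' = (pos s)(0 := y)" "lastd s' = Some 0" by (simp_all add: s'_def after_def)
  show ?thesis unfolding s'_def[symmetric]
  proof
    assume L: "legal n e s' k' j'"
    then have a: "k' < n" "peg j'" "j' \<noteq> pos s' k'" "lastd s' \<noteq> Some k'"
      and free: "\<forall>i<k'. pos s' i \<noteq> pos s' k' \<and> pos s' i \<noteq> j'"
      unfolding legal_def by auto
    have "0 < k'" using a(4) pos' by auto
    then have b: "pos s k' \<noteq> y" "j' \<noteq> y" "j' \<noteq> pos s k'" "peg (pos s k')"
      using a(1,3) free[rule_format, of 0] pos' ad by (auto simp: admissible_def)
    have "\<not> k' < k" using below b \<open>0 < k'\<close> by auto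
    moreover have "\<not> k < k'"
    proof
      assume "k < k'"
      then have "pos s k \<noteq> pos s k'" "pos s k \<noteq> j'" using free[rule_format, of k] pos' k(2) by auto
      then show False using b k(4,5) y(1) a(2) by (auto simp: peg_def)
    qed
    ultimately show "k' = forced_disk s y \<and> j' = 6 - y - pos s (forced_disk s y)"
      using b k a(2) y(1) by (auto simp: peg_def)
  next
    assume "k' = forced_disk s y \<and> j' = 6 - y - pos s (forced_disk s y)"
    then have kj: "k' = k" "j' = 6 - y - pos s k" using k(1) by auto
    have "pos (after n s' k j') 0 \<noteq> pos (after n s' k j') k"
      using k y kj by (auto simp: after_def pos' peg_def)
    then have "\<not> tower n (pos (after n s' k j')) q" for q using no_tower_if_apart k(2,3) by blast
    then show "legal n e s' k' j'"
      using k below y kj by (auto simp: legal_def pos' peg_def)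
  qed
qed

lemma pos_play_round:
  "pos (play_round s y) = (pos s)(0 := y, forced_disk s y := 6 - y - pos s (forced_disk s y))"
  by (simp add: play_round_def after_def)

lemma lastd_play_round: "lastd (play_round s y) = Some (forced_disk s y)"
  by (simp add: play_round_def after_def)

lemma movedL_play_round: "movedL (play_round s y) \<longleftrightarrow> movedL s \<or> forced_disk s y = n - 1"
  using three_disks by (auto simp: play_round_def after_def)

lemma wins_by_round:
  assumes "can_play_round s y" "winning (play_round s y) (d + round_gain s y)"
  shows "winning s d"
proof -
  obtain k where k: "k = forced_disk s y" "0 < k" "k < n" "pos s k \<noteq> y" "peg (pos s k)"
    using forced_disk_of_round[OF assms(1)] by blast
  have y: "peg y" "y \<noteq> pos s 0" and ad: "admissible s"
    using assms(1) by (auto simp: can_play_round_def)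
  define s' where "s' = after n s 0 y"
  have pos': "pos s' = (pos s)(0 := y)" by (simp add: s'_def after_def)
  have not_ends': "\<not> ends n e s'" and no_tower': "\<not> tower n (pos s') q" for q
    using k y not_ends_if_apart[of k s'] no_tower_if_apart[of k "pos s'"] by (auto simp: pos')
  have "pos (play_round s y) 0 \<noteq> pos (play_round s y) k"
    using k y by (auto simp: pos_play_round peg_def)
  then have not_ends'': "\<not> ends n e (play_round s y)"
    using not_ends_if_apart k(2,3) by blast
  have first: "legal n e s 0 y"
    using y ad k no_tower' by (auto simp: legal_def admissible_def s'_def)
  have reply: "legal n e s' k (6 - y - pos s k)"
    using legal_reply_iff[OF assms(1)] k(1) by (simp add: s'_def)
  show ?thesis
  proof (rule wins.step[OF first s'_def refl], intro disjI2 conjI allI impI)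
    show "\<not> ends n e s'" by (fact not_ends')
    show "\<exists>k' j'. legal n e s' k' j'" using reply by blast
  next
    fix k' j' assume "legal n e s' k' j'"
    then have "k' = k" "j' = 6 - y - pos s k"
      using legal_reply_iff[OF assms(1)] k(1) by (simp_all add: s'_def)
    moreover have "pos s' k = pos s k" using k(2) pos' by simp
    ultimately have reply_state: "after n s' k' j' = play_round s y"
      and gain: "d + W (pos s 0) y - W (pos s' k') j' = d + round_gain s y"
      using k(1) by (simp_all add: play_round_def round_gain_def s'_def)
    show "\<not> ends n e (after n s' k' j')" using not_ends'' reply_state by simp
    show "winning (after n s' k' j') (d + W (pos s 0) y - W (pos s' k') j')"
      using assms(2) unfolding reply_state gain .
  qed
qed

lemma wins_by_plays: "plays s t \<delta> \<Longrightarrow> winning t (d + \<delta>) \<Longrightarrow> winning s d"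
proof (induction arbitrary: d rule: plays.induct)
  case (plays_round s y t \<delta>)
  show ?case
    by (rule wins_by_round[OF plays_round.hyps(1)])
      (use plays_round.IH[of "d + round_gain s y"] plays_round.prems in \<open>simp add: add.assoc\<close>)
qed simp

lemma plays_trans: "plays s t a \<Longrightarrow> plays t u b \<Longrightarrow> plays s u (a + b)"
proof (induction rule: plays.induct)
  case (plays_round s y t \<delta>)
  then show ?case using plays.plays_round[of s y u "\<delta> + b"] by (simp add: add.assoc)
qed simp

lemma admissible_play_round:
  assumes "can_play_round s y"
  shows "admissible (play_round s y)"
proof -
  obtain k where k: "k = forced_disk s y" "0 < k" "peg (pos s k)" "pos s k \<noteq> y"
    using forced_disk_of_round[OF assms] by blast
  have "peg (6 - y - pos s k)" using k assms by (auto simp: can_play_round_def peg_def)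
  then show ?thesis
    using assms k by (auto simp: can_play_round_def admissible_def pos_play_round lastd_play_round)
qed

lemma plays_admissible: "plays s t \<delta> \<Longrightarrow> admissible s \<Longrightarrow> admissible t"
  by (induction rule: plays.induct) (auto intro: admissible_play_round)

lemma plays_movedL: "plays s t \<delta> \<Longrightarrow> movedL s \<Longrightarrow> movedL t"
  by (induction rule: plays.induct) (simp_all add: movedL_play_round)

lemma plays_largest_moved: "plays s t \<delta> \<Longrightarrow> movedL t \<or> pos t (n - 1) = pos s (n - 1)"
proof (induction rule: plays.induct)
  case (plays_round s y t \<delta>)
  show ?case
  proof (cases "forced_disk s y = n - 1")
    case True
    then show ?thesis using plays_movedL[OF plays_round.hyps(2)] by (simp add: movedL_play_round)
  next
    case False
    have "n - 1 \<noteq> 0" using three_disks by simp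
    with False show ?thesis using plays_round.IH by (simp add: pos_play_round)
  qed
qed simp

lemma plays_equal_weights:
  assumes "w12 = w13" "w13 = w23"
  shows "plays s t \<delta> \<Longrightarrow> \<delta> = 0"
proof (induction rule: plays.induct)
  case (plays_round s y t \<delta>)
  have "round_gain s y = 0" unfolding round_gain_def wt_def using assms by simp
  with plays_round.IH show ?case by simp
qed simp

lemma plays_one_round: "can_play_round s y \<Longrightarrow> plays s (play_round s y) (round_gain s y)"
  using plays_round[OF _ plays_refl] by simp

section \<open>Gathering disks on one peg\<close>

lemma rotation_round:
  assumes "admissible s" "pos s 0 \<noteq> pos s 1"
  defines "y \<equiv> 6 - pos s 0 - pos s 1"
  shows "can_play_round s y" and "pos (play_round s y) = (pos s)(0 := y, 1 := pos s 0)"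
proof -
  have pegs: "peg (pos s 0)" "peg (pos s 1)" using assms(1) three_disks by (auto simp: admissible_def)
  then have y: "peg y" "y \<noteq> pos s 0" "y \<noteq> pos s 1" "6 - y - pos s 1 = pos s 0"
    using assms(2) by (auto simp: y_def peg_def)
  then show "can_play_round s y"
    using assms(1) three_disks by (auto simp: can_play_round_def intro!: exI[of _ 1])
  have "forced_disk s y = 1" using y by (intro forced_disk_eqI) auto
  then show "pos (play_round s y) = (pos s)(0 := y, 1 := pos s 0)"
    using y by (simp add: pos_play_round)
qed

lemma gather_disk_one_apart:
  assumes "admissible s" "peg f" "pos s 0 \<noteq> pos s 1"
  shows "\<exists>t \<delta>. plays s t \<delta> \<and> (\<forall>k\<ge>2. pos t k = pos s k) \<and> pos t 1 = f \<and> pos t 0 \<noteq> f"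
proof (cases "pos s 1 = f")
  case True
  then show ?thesis using assms(3) plays_refl by blast
next
  case False
  define s1 where "s1 = play_round s (6 - pos s 0 - pos s 1)"
  have round1: "plays s s1 (round_gain s (6 - pos s 0 - pos s 1))"
    unfolding s1_def by (intro plays_one_round rotation_round assms)
  have pos1: "pos s1 = (pos s)(0 := 6 - pos s 0 - pos s 1, 1 := pos s 0)"
    unfolding s1_def by (intro rotation_round assms)
  have pegs: "peg (pos s 0)" "peg (pos s 1)" using assms(1) three_disks by (auto simp: admissible_def)
  show ?thesis
  proof (cases "pos s 0 = f")
    case True
    have "pos s1 0 \<noteq> f" using True pegs assms(3) by (auto simp: pos1 peg_def)
    then show ?thesis using round1 True by (auto simp: pos1)
  next
    case False
    have ad1: "admissible s1" using plays_admissible[OF round1 assms(1)] .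
    have apart1: "pos s1 0 \<noteq> pos s1 1" using pegs assms(3) by (auto simp: pos1 peg_def)
    define s2 where "s2 = play_round s1 (6 - pos s1 0 - pos s1 1)"
    have round2: "plays s1 s2 (round_gain s1 (6 - pos s1 0 - pos s1 1))"
      unfolding s2_def by (intro plays_one_round rotation_round ad1 apart1)
    have pos2: "pos s2 = (pos s1)(0 := 6 - pos s1 0 - pos s1 1, 1 := pos s1 0)"
      unfolding s2_def by (intro rotation_round ad1 apart1)
    have "pos s2 1 = f" "pos s2 0 \<noteq> f"
      using pegs assms(2,3) False \<open>pos s 1 \<noteq> f\<close> by (auto simp: pos2 pos1 peg_def)
    then show ?thesis using plays_trans[OF round1 round2] by (auto simp: pos2 pos1)
  qed
qed

lemma gather_disk_one:
  assumes "admissible s" "peg f"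
  shows "\<exists>t \<delta>. plays s t \<delta> \<and> (\<forall>k\<ge>2. pos t k = pos s k) \<and> pos t 1 = f \<and> pos t 0 \<noteq> f"
proof (cases "pos s 0 = pos s 1")
  case False
  then show ?thesis using gather_disk_one_apart assms by blast
next
  case True
  define y where "y = (if pos s 0 = 1 then 2 else 1 :: nat)"
  have pegs: "peg (pos s 0)" "peg (pos s 1)" using assms(1) three_disks by (auto simp: admissible_def)
  have y: "peg y" "y \<noteq> pos s 0" "y \<noteq> pos s 1" using True by (auto simp: y_def peg_def)
  have round: "can_play_round s y"
    using assms(1) y three_disks by (auto simp: can_play_round_def intro!: exI[of _ 1])
  have forced: "forced_disk s y = 1" using y by (intro forced_disk_eqI) auto
  define s1 where "s1 = play_round s y"
  have pos1: "pos s1 = (pos s)(0 := y, 1 := 6 - y - pos s 1)"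
    using forced by (simp add: s1_def pos_play_round)
  have "pos s1 0 \<noteq> pos s1 1" using pegs y by (auto simp: pos1 peg_def)
  then obtain t \<delta> where t: "plays s1 t \<delta>" "\<forall>k\<ge>2. pos t k = pos s1 k" "pos t 1 = f" "pos t 0 \<noteq> f"
    using gather_disk_one_apart[OF admissible_play_round[OF round] assms(2)] s1_def by blast
  have "plays s t (round_gain s y + \<delta>)" using plays_round[OF round] t(1) s1_def by simp
  moreover have "\<forall>k\<ge>2. pos t k = pos s k" using t(2) by (simp add: pos1)
  ultimately show ?thesis using t(3,4) by blast
qed

lemma gather:
  assumes "2 \<le> m" "m \<le> n" "admissible s" "peg f"
  shows "\<exists>t \<delta>. plays s t \<delta> \<and> (\<forall>k\<ge>m. pos t k = pos s k) \<and> (\<forall>k. 0 < k \<and> k < m \<longrightarrow> pos t k = f)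
    \<and> pos t 0 \<noteq> f"
  using assms
proof (induction m arbitrary: s f rule: nat_induct_at_least)
  case base
  then show ?case using gather_disk_one[of s f] by (metis One_nat_def less_2_cases_iff not_gr0)
next
  case (Suc m)
  have pegs: "peg (pos s m)" "peg f" using Suc.prems by (auto simp: admissible_def)
  show ?case
  proof (cases "pos s m = f")
    case True
    obtain t \<delta> where t: "plays s t \<delta>" "\<forall>k\<ge>m. pos t k = pos s k" "\<forall>k. 0 < k \<and> k < m \<longrightarrow> pos t k = f"
      "pos t 0 \<noteq> f"
      using Suc.IH[of s f] Suc.prems by auto
    then have "\<forall>k. 0 < k \<and> k < Suc m \<longrightarrow> pos t k = f" using True less_Suc_eq by auto
    then show ?thesis using t by auto
  next
    case False
    define c where "c = 6 - pos s m - f"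
    have c: "peg c" "c \<noteq> pos s m" "c \<noteq> f" "6 - c - pos s m = f"
      using pegs False by (auto simp: c_def peg_def)
    obtain t1 \<delta>1 where t1: "plays s t1 \<delta>1" "\<forall>k\<ge>m. pos t1 k = pos s k"
      "\<forall>k. 0 < k \<and> k < m \<longrightarrow> pos t1 k = c" "pos t1 0 \<noteq> c"
      using Suc.IH[of s c] Suc.prems c(1) by auto
    have ad1: "admissible t1" using plays_admissible t1(1) Suc.prems(2) by blast
    have round: "can_play_round t1 c"
      using ad1 c t1 Suc by (auto simp: can_play_round_def intro!: exI[of _ m])
    have "forced_disk t1 c = m" using t1 c Suc.hyps by (intro forced_disk_eqI) auto
    then have pos2: "pos (play_round t1 c) = (pos t1)(0 := c, m := f)"
      using t1(2) c(4) by (simp add: pos_play_round)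
    obtain t3 \<delta>3 where t3: "plays (play_round t1 c) t3 \<delta>3"
      "\<forall>k\<ge>m. pos t3 k = pos (play_round t1 c) k" "\<forall>k. 0 < k \<and> k < m \<longrightarrow> pos t3 k = f" "pos t3 0 \<noteq> f"
      using Suc.IH[of "play_round t1 c" f] Suc.prems admissible_play_round[OF round] by auto
    have "plays s t3 (\<delta>1 + (round_gain t1 c + \<delta>3))"
      using plays_trans[OF t1(1) plays_round[OF round t3(1)]] .
    moreover have "\<forall>k\<ge>Suc m. pos t3 k = pos s k" using t3(2) t1(2) Suc.hyps by (simp add: pos2)
    moreover have "\<forall>k. 0 < k \<and> k < Suc m \<longrightarrow> pos t3 k = f"
      using t3(2,3) less_Suc_eq by (auto simp: pos2)
    ultimately show ?thesis using t3(4) by blast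
  qed
qed

section \<open>Ending the game\<close>

lemma ending_peg:
  assumes "valid_ending e"
  obtains q where "peg q" "\<And>s. tower n (pos s) q \<Longrightarrow> movedL s \<Longrightarrow> movedS s \<Longrightarrow> ends n e s"
proof (cases e)
  case (EC1 f)
  with assms have "peg f" by (simp add: valid_ending_def peg_def)
  then show thesis by (rule that) (simp add: EC1 ends_def)
next
  case EC2
  show thesis by (rule that[of 1]) (simp_all add: EC2 ends_def peg_def)
next
  case EC3
  show thesis by (rule that[of 1]) (simp_all add: EC3 ends_def peg_def)
next
  case EC4
  show thesis by (rule that[of 1]) (auto simp: EC4 ends_def peg_def)
next
  case EC5
  show thesis by (rule that[of 1]) (auto simp: EC5 ends_def peg_def)
qed

lemma wins_by_final_move:
  assumes "admissible t" "peg q" "pos t 0 \<noteq> q" "ends n e (after n t 0 q)" "0 < d + W (pos t 0) q"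
  shows "winning t d"
proof (rule wins.step[OF _ refl refl])
  show "legal n e t 0 q" using assms(1-4) three_disks by (auto simp: legal_def admissible_def)
qed (use assms(4,5) in blast)

text \<open>Gathering disks 1 to n-1 first on a peg away from the largest disk makes the largest disk move,
  as the ending conditions EC2 and EC4 require.\<close>
lemma plays_to_final_move:
  assumes "admissible s" "valid_ending e"
  obtains t \<delta> q where "plays s t \<delta>" "\<And>d. 0 < d + W (pos t 0) q \<Longrightarrow> winning t d"
proof -
  obtain q where q: "peg q" "\<And>s. tower n (pos s) q \<Longrightarrow> movedL s \<Longrightarrow> movedS s \<Longrightarrow> ends n e s"
    using ending_peg[OF assms(2)] by blast
  define g where "g = (if pos s (n - 1) = 1 then 2 else 1 :: nat)"
  have g: "peg g" "g \<noteq> pos s (n - 1)" by (auto simp: g_def peg_def)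
  obtain t1 \<delta>1 where t1: "plays s t1 \<delta>1" "\<forall>k. 0 < k \<and> k < n \<longrightarrow> pos t1 k = g"
    using gather[OF _ order.refl assms(1) g(1)] three_disks by auto
  have "0 < n - 1" "n - 1 < n" using three_disks by auto
  then have moved1: "movedL t1" using plays_largest_moved[OF t1(1)] t1(2) g(2) by auto
  obtain t \<delta> where t: "plays t1 t \<delta>" "\<forall>k. 0 < k \<and> k < n \<longrightarrow> pos t k = q" "pos t 0 \<noteq> q"
    using gather[OF _ order.refl plays_admissible[OF t1(1) assms(1)] q(1)] three_disks by auto
  have "tower n (pos (after n t 0 q)) q" using t(2) by (auto simp: tower_def after_def)
  moreover have "movedL (after n t 0 q)" "movedS (after n t 0 q)"
    using plays_movedL[OF t(1) moved1] by (simp_all add: after_def)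
  ultimately have "ends n e (after n t 0 q)" by (rule q(2))
  then have "winning t d" if "0 < d + W (pos t 0) q" for d
    using wins_by_final_move plays_admissible[OF plays_trans[OF t1(1) t(1)] assms(1)] q(1) t(3) that
    by blast
  then show thesis using that plays_trans[OF t1(1) t(1)] by blast
qed

lemma wins_with_large_advantage:
  assumes "admissible s" "valid_ending e"
  obtains c where "\<And>d. c < d \<Longrightarrow> winning s d"
proof -
  obtain t \<delta> q where "plays s t \<delta>" "\<And>d. 0 < d + W (pos t 0) q \<Longrightarrow> winning t d"
    using plays_to_final_move[OF assms] by blast
  then have "winning s d" if "- \<delta> - W (pos t 0) q < d" for d
    using wins_by_plays that by simp
  then show thesis by (rule that)
qed

lemma wins_equal_weights:
  assumes "w12 = w13" "w13 = w23" "0 < w23" "admissible s" "valid_ending e"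
  shows "winning s 0"
proof -
  obtain t \<delta> q where play: "plays s t \<delta>" and win: "\<And>d. 0 < d + W (pos t 0) q \<Longrightarrow> winning t d"
    using plays_to_final_move[OF assms(4,5)] by blast
  have "\<delta> = 0" using plays_equal_weights[OF assms(1,2) play] .
  moreover have "W (pos t 0) q = w23" using assms(1,2) by (simp add: wt_def)
  ultimately show ?thesis using wins_by_plays[OF play] win assms(3) by simp
qed

section \<open>Profitable cycles\<close>

fun play_rounds :: "hstate \<Rightarrow> nat list \<Rightarrow> hstate" where
  "play_rounds s [] = s"
| "play_rounds s (y # ys) = play_rounds (play_round s y) ys"

fun rounds_gain :: "hstate \<Rightarrow> nat list \<Rightarrow> real" where
  "rounds_gain s [] = 0"
| "rounds_gain s (y # ys) = round_gain s y + rounds_gain (play_round s y) ys"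

fun can_play_rounds :: "hstate \<Rightarrow> nat list \<Rightarrow> bool" where
  "can_play_rounds s [] = True"
| "can_play_rounds s (y # ys) \<longleftrightarrow> can_play_round s y \<and> can_play_rounds (play_round s y) ys"

lemma plays_rounds: "can_play_rounds s ys \<Longrightarrow> plays s (play_rounds s ys) (rounds_gain s ys)"
  by (induction s ys rule: play_rounds.induct) (auto intro: plays.intros)

lemma forced_disk_1: "pos s 1 \<noteq> y \<Longrightarrow> forced_disk s y = 1"
  by (rule forced_disk_eqI) auto

lemma forced_disk_2: "pos s 1 = y \<Longrightarrow> pos s 2 \<noteq> y \<Longrightarrow> forced_disk s y = 2"
  by (rule forced_disk_eqI) (auto simp: less_2_cases_iff)

lemma can_play_roundI:
  assumes "admissible s" "peg y" "y \<noteq> pos s 0" "pos s 1 \<noteq> y \<or> pos s 2 \<noteq> y"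
  shows "can_play_round s y"
proof -
  obtain k :: nat where "k \<in> {1, 2}" "pos s k \<noteq> y" using assms(4) by blast
  then show ?thesis using assms(1-3) three_disks by (auto simp: can_play_round_def intro!: exI[of _ k])
qed

lemma W_simps:
  "W (Suc 0) 2 = w12" "W 2 (Suc 0) = w12" "W (Suc 0) 3 = w13" "W 3 (Suc 0) = w13"
  "W 2 3 = w23" "W 3 2 = w23"
  by (auto simp: wt_def doubleton_eq_iff)

text \<open>Disk 2, moved in every cycle, is the largest disk when n = 3.\<close>
definition cycled :: "hstate \<Rightarrow> hstate" where
  "cycled s = s\<lparr>lastd := Some 1, movedL := movedL s \<or> n = 3, movedS := True\<rparr>"

text \<open>Each list gives the successive pegs of disk 0; the forced replies move only disks 1 and 2
  and restore the starting positions.\<close>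
lemma cycles:
  assumes "admissible s" "pos s 1 = 1" "pos s 2 = 1" "pos s 0 = a" "{a, b} = {2, 3}"
  shows "plays s (cycled s) (4 * W 1 a - 2 * W 1 b - 2 * W a b)"
    and "plays s (cycled s) (4 * W 1 b - 2 * W 1 a - 2 * W a b)"
    and "plays s (cycled s) (4 * W a b - 2 * W 1 a - 2 * W 1 b)"
proof -
  have ab: "a = 2 \<and> b = 3 \<or> a = 3 \<and> b = 2" using assms(5) by (auto simp: doubleton_eq_iff)
  have pegs: "k < n \<Longrightarrow> pos s k \<in> {1, 2, 3}" for k using assms(1) by (simp add: admissible_def peg_def)
  have cycle: "plays s (cycled s) g"
    if "can_play_rounds s ys" "\<forall>k. pos (play_rounds s ys) k = pos s k" "lastd (play_rounds s ys) = Some 1"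
      "movedL (play_rounds s ys) = (movedL s \<or> n = 3)" "movedS (play_rounds s ys)" "rounds_gain s ys = g"
    for ys g
  proof -
    have "play_rounds s ys = cycled s"
      using that(2-5) by (intro hstate.equality) (simp_all add: cycled_def fun_eq_iff)
    then show ?thesis using plays_rounds[OF that(1)] that(6) by simp
  qed
  have largest: "\<not> n \<le> Suc 0" "(Suc 0 = n - Suc 0) = False" "(n - Suc 0 = 2) = (n = 3)"
    using three_disks by auto
  note evaluation = largest can_play_roundI admissible_def play_round_def after_def round_gain_def
    forced_disk_1 forced_disk_2 peg_def W_simps pegs
  show "plays s (cycled s) (4 * W 1 a - 2 * W 1 b - 2 * W a b)"
    by (rule disjE[OF ab]; elim conjE; rule cycle[of "[b, 1, b, a, 1, a, 1, a, 1, a]"];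
      insert assms(1-4); simp add: evaluation)
  show "plays s (cycled s) (4 * W 1 b - 2 * W 1 a - 2 * W a b)"
    by (rule disjE[OF ab]; elim conjE; rule cycle[of "[b, 1, b, 1, b, 1, b, a, 1, a]"];
      insert assms(1-4); simp add: evaluation)
  show "plays s (cycled s) (4 * W a b - 2 * W 1 a - 2 * W 1 b)"
    by (rule disjE[OF ab]; elim conjE; rule cycle[of "[b, a, b, 1, a, b, a]"];
      insert assms(1-4); simp add: evaluation)
qed

lemma wins_by_pumping:
  assumes "plays u u G" "0 < G" "\<And>d. c < d \<Longrightarrow> winning u d"
  shows "winning u d"
proof -
  have pumped: "winning u d" if "c < d + real K * G" for K d
    using that
  proof (induction K arbitrary: d)
    case 0
    then show ?case using assms(3) by simp
  next
    case (Suc K)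
    then have "winning u (d + G)" by (simp add: algebra_simps)
    then show ?case using wins_by_plays[OF assms(1)] by blast
  qed
  obtain K where "c - d < real K * G" using reals_Archimedean3[OF assms(2)] by blast
  then have "c < d + real K * G" by simp
  then show ?thesis by (rule pumped)
qed

lemma positive_cycle:
  assumes "\<not> (w12 = w13 \<and> w13 = w23)" "a \<in> {2, 3}"
  obtains G where "0 < G"
    "\<And>s. admissible s \<Longrightarrow> pos s 0 = a \<Longrightarrow> pos s 1 = 1 \<Longrightarrow> pos s 2 = 1 \<Longrightarrow> plays s (cycled s) G"
proof -
  define b where "b = 5 - a"
  have ab: "{a, b} = {2, 3}" using assms(2) by (auto simp: b_def)
  have "W 1 a = w12 \<and> W 1 b = w13 \<and> W a b = w23 \<or> W 1 a = w13 \<and> W 1 b = w12 \<and> W a b = w23"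
    using assms(2) by (auto simp: b_def W_simps)
  then have "\<not> (W 1 a = W 1 b \<and> W 1 b = W a b)" using assms(1) by auto
  \<comment> \<open>the three cycle gains sum to 0 and are not all 0\<close>
  then have "0 < 4 * W 1 a - 2 * W 1 b - 2 * W a b \<or> 0 < 4 * W 1 b - 2 * W 1 a - 2 * W a b
      \<or> 0 < 4 * W a b - 2 * W 1 a - 2 * W 1 b"
    by linarith
  then show thesis using that cycles[OF _ _ _ _ ab] by metis
qed

lemma admissible_cycled: "admissible s \<Longrightarrow> admissible (cycled s)"
  by (simp add: admissible_def cycled_def)

lemma wins_unequal_weights:
  assumes "\<not> (w12 = w13 \<and> w13 = w23)" "admissible s" "valid_ending e"
  shows "winning s d"
proof -
  obtain t \<delta> where t: "plays s t \<delta>" "\<forall>k. 0 < k \<and> k < 3 \<longrightarrow> pos t k = 1" "pos t 0 \<noteq> 1"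
    using gather[of 3 s 1] three_disks assms(2) by (auto simp: peg_def)
  have ad: "admissible t" using plays_admissible[OF t(1) assms(2)] .
  then have "peg (pos t 0)" using three_disks by (simp add: admissible_def)
  then have "pos t 0 \<in> {2, 3}" using t(3) by (auto simp: peg_def)
  then obtain G where G: "0 < G" and cycle:
    "\<And>u. admissible u \<Longrightarrow> pos u 0 = pos t 0 \<Longrightarrow> pos u 1 = 1 \<Longrightarrow> pos u 2 = 1 \<Longrightarrow> plays u (cycled u) G"
    using positive_cycle[OF assms(1)] by blast
  have "pos (cycled t) = pos t" "cycled (cycled t) = cycled t"
    by (simp_all add: cycled_def)
  then have "plays (cycled t) (cycled t) G"
    using cycle[OF admissible_cycled[OF ad]] t(2) by simp
  moreover obtain c where "\<And>d. c < d \<Longrightarrow> winning (cycled t) d"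
    using wins_with_large_advantage[OF admissible_cycled[OF ad] assms(3)] by blast
  ultimately have "winning (cycled t) d'" for d'
    using wins_by_pumping G by blast
  then have "winning t d'" for d'
    using wins_by_plays[OF cycle[OF ad]] t(2) by simp
  then show ?thesis using wins_by_plays[OF t(1)] by blast
qed

end

theorem mainTheorem8:
  fixes n :: nat and e :: ending and w12 w13 w23 :: real
    and p :: "nat \<Rightarrow> nat" and l :: "nat option"
  assumes "n \<ge> 3"
    and "valid_ending e"
    and "\<forall>k<n. peg (p k)"
    and "case l of None \<Rightarrow> True | Some k \<Rightarrow> 0 < k \<and> k < n"
    and "\<not> ends n e \<lparr> pos = p, lastd = l, movedL = False, movedS = False \<rparr>"
    and "\<not> (w12 = w13 \<and> w13 = w23 \<and> w23 \<le> 0)"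
  shows "wins n e w12 w13 w23 \<lparr> pos = p, lastd = l, movedL = False, movedS = False \<rparr> 0"
proof -
  \<comment> \<open>The start need not be non-final: wins only inspects positions after moves\<close>
  interpret scoring_hanoi n e w12 w13 w23 by unfold_locales (rule assms(1))
  have "admissible \<lparr> pos = p, lastd = l, movedL = False, movedS = False \<rparr>"
    using assms(3,4) by (cases l) (auto simp: admissible_def)
  then show ?thesis
    using wins_equal_weights wins_unequal_weights assms(2,6) by (cases "w12 = w13 \<and> w13 = w23") auto
qed

end
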